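(* Let $V$ be a finite-dimensional real vector space with preferred basis $(e_1,\dots,e_n)$, and let $X(V)=\bigoplus_{j,k} S^j(V)\otimes\Lambda_k(V)$ with the product and norm $\|\cdot\|$ described below. Then $\|\cdot\|$ is a norm on $X(V)$ and for all $A,B\in X(V)$, $$\|A\cdot B\|\le \|A\|\,\|B\|.$$
   Context: $S^j(V)$ is the $j$-th symmetric power and $\Lambda_k(V)$ the $k$-th exterior power of $V$. For a list $U=(u_1,\dots,u_j)$ of vectors write $\nabla^j_U=u_1u_2\cdots u_j\in S^j(V)$ (symmetric product), and for $W=(w_1,\dots,w_k)$ write $\alpha(W)=w_1\wedge\dots\wedge w_k$; write $\nabla^j_U\alpha$ for $\nabla^j_U\otimes\alpha$. The product on $X(V)$ is defined on such elements by $\nabla^{j_1}_{U_1}\alpha(W_1)\cdot\nabla^{j_2}_{U_2}\alpha(W_2)=\nabla^{j_1+j_2}_{(U_1,U_2)}\alpha(W_1,W_2)/2^{j_1+j_2}$ for $j_1,j_2\ge1$ (concatenated lists), as scalar multiplication if $j_1=0$ or $j_2=0$, and extended bilinearly. The inner product on $V$ declares $(e_i)$ orthonormal; $M(\alpha)$ is the mass of a simple $k$-vector. Define $\|\nabla^j_U\alpha\|_j=|u_1|\cdots|u_j|M(\alpha)$. The basis of $V$ generates a basis of $S^j(V)\otimes\Lambda_k(V)$; for $A^j=\sum_i a_i\nabla^j_{U_i}\alpha_i$ written in this basis set $\|A^j\|_j=\sum_i|a_i|\,\|\nabla^j_{U_i}\alpha_i\|_j$, and for $A=\sum_j A^j$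 (with $A^j$ the $S^j$-components) set $\|A\|=\sum_j\|A^j\|_j$. *)

theory Defs
  imports Complex_Main "HOL-Library.Multiset"
begin

text \<open>Coordinate model of X(V) for V = R^n with orthonormal preferred basis e_0,...,e_(n-1).
  The basis of S^j(V) tensor Lambda_k(V) consists of the elements
  e_(i1) ... e_(ij) tensor e_(l1) wedge ... wedge e_(lk) (l1 < ... < lk), indexed by a
  multiset a of basis indices (size a = j) and a set I of basis indices (card I = k).\<close>

type_synonym xidx = "nat multiset \<times> nat set"

definition valid_idx :: "nat \<Rightarrow> xidx \<Rightarrow> bool" where
  "valid_idx n x \<longleftrightarrow> set_mset (fst x) \<subseteq> {..<n} \<and> snd x \<subseteq> {..<n}"

definition supp :: "(xidx \<Rightarrow> real) \<Rightarrow> xidx set" where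
  "supp A = {x. A x \<noteq> 0}"

definition XV :: "nat \<Rightarrow> (xidx \<Rightarrow> real) set" where
  "XV n = {A. finite (supp A) \<and> (\<forall>x\<in>supp A. valid_idx n x)}"

text \<open>e_I wedge e_J = wedge_sign I J * e_(I union J), with e_I the increasingly ordered wedge.\<close>
definition wedge_sign :: "nat set \<Rightarrow> nat set \<Rightarrow> real" where
  "wedge_sign I J = (if I \<inter> J = {} then (-1) ^ card {(i, j). i \<in> I \<and> j \<in> J \<and> j < i} else 0)"

definition bcoef :: "xidx \<Rightarrow> xidx \<Rightarrow> real" where
  "bcoef x y = wedge_sign (snd x) (snd y) *
     (if size (fst x) = 0 \<or> size (fst y) = 0 then 1
      else 1 / 2 ^ (size (fst x) + size (fst y)))"

definition bidx :: "xidx \<Rightarrow> xidx \<Rightarrow> xidx" where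
  "bidx x y = (fst x + fst y, snd x \<union> snd y)"

definition Xmult :: "(xidx \<Rightarrow> real) \<Rightarrow> (xidx \<Rightarrow> real) \<Rightarrow> (xidx \<Rightarrow> real)" where
  "Xmult A B = (\<lambda>z. \<Sum>(x, y) \<in> supp A \<times> supp B.
                     if bidx x y = z then A x * B y * bcoef x y else 0)"

text \<open>Norm of a basis element: product of |e_i| (=1) times mass of e_I (=1).\<close>
definition basis_norm :: "xidx \<Rightarrow> real" where
  "basis_norm x = (\<Prod>i\<in>#fst x. norm (1::real)) * 1"

definition Xnorm :: "(xidx \<Rightarrow> real) \<Rightarrow> real" where
  "Xnorm A = (\<Sum>x\<in>supp A. \<bar>A x\<bar> * basis_norm x)"

end

theory Submission
  imports Defs
begin

text \<open>Since every basis element has norm 1, \<open>Xnorm\<close> is the \<open>\<ell>\<^sup>1\<close>-norm of the coefficient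
  function, which gives the norm axioms. The product of two basis elements is a basis element
  times a sign and a power of \<open>1/2\<close>, so \<open>\<bar>bcoef x y\<bar> \<le> 1\<close>, and submultiplicativity follows
  by expanding the product and grouping the pairs of basis indices by the index of their
  product.\<close>

lemma basis_norm_eq_1 [simp]: "basis_norm x = 1"
  by (simp add: basis_norm_def)

lemma Xnorm_eq_sum_abs: "Xnorm A = (\<Sum>x\<in>supp A. \<bar>A x\<bar>)"
  by (simp add: Xnorm_def)

lemma Xnorm_eq_sum_abs_superset:
  assumes "finite S" "supp A \<subseteq> S"
  shows "Xnorm A = (\<Sum>x\<in>S. \<bar>A x\<bar>)"
  unfolding Xnorm_eq_sum_abs
  by (rule sum.mono_neutral_left[OF assms]) (auto simp: supp_def)

lemma Xnorm_nonneg: "Xnorm A \<ge> 0"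
  by (simp add: Xnorm_eq_sum_abs sum_nonneg)

lemma Xnorm_eq_0_iff:
  assumes "finite (supp A)"
  shows "Xnorm A = 0 \<longleftrightarrow> A = (\<lambda>_. 0)"
proof
  assume "Xnorm A = 0"
  then have "\<forall>x\<in>supp A. \<bar>A x\<bar> = 0"
    using assms by (simp add: Xnorm_eq_sum_abs sum_nonneg_eq_0_iff)
  then show "A = (\<lambda>_. 0)" by (auto simp: supp_def)
qed (simp add: Xnorm_eq_sum_abs supp_def)

lemma Xnorm_scale:
  assumes "finite (supp A)"
  shows "Xnorm (\<lambda>x. c * A x) = \<bar>c\<bar> * Xnorm A"
proof -
  have "Xnorm (\<lambda>x. c * A x) = (\<Sum>x\<in>supp A. \<bar>c * A x\<bar>)"
    by (rule Xnorm_eq_sum_abs_superset[OF assms]) (auto simp: supp_def)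
  then show ?thesis by (simp add: Xnorm_eq_sum_abs abs_mult sum_distrib_left)
qed

lemma Xnorm_add_le:
  assumes "finite (supp A)" "finite (supp B)"
  shows "Xnorm (\<lambda>x. A x + B x) \<le> Xnorm A + Xnorm B"
proof -
  let ?S = "supp A \<union> supp B"
  have fin: "finite ?S" using assms by simp
  have "Xnorm (\<lambda>x. A x + B x) = (\<Sum>x\<in>?S. \<bar>A x + B x\<bar>)"
    by (rule Xnorm_eq_sum_abs_superset[OF fin]) (auto simp: supp_def)
  also have "\<dots> \<le> (\<Sum>x\<in>?S. \<bar>A x\<bar> + \<bar>B x\<bar>)"
    by (intro sum_mono abs_triangle_ineq)
  also have "\<dots> = Xnorm A + Xnorm B"
    by (simp add: sum.distrib Xnorm_eq_sum_abs_superset[OF fin])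
  finally show ?thesis .
qed

lemma abs_bcoef_le_1: "\<bar>bcoef x y\<bar> \<le> 1"
  unfolding bcoef_def wedge_sign_def by (auto simp: abs_mult power_abs)

lemma abs_Xmult_le:
  assumes "finite (supp A)" "finite (supp B)"
  shows "\<bar>Xmult A B z\<bar> \<le>
    (\<Sum>(x, y) \<in> {p \<in> supp A \<times> supp B. case_prod bidx p = z}. \<bar>A x\<bar> * \<bar>B y\<bar>)"
proof -
  let ?F = "{p \<in> supp A \<times> supp B. case_prod bidx p = z}"
  let ?f = "\<lambda>(x, y). A x * B y * bcoef x y"
  have "Xmult A B z = (\<Sum>p \<in> supp A \<times> supp B. if case_prod bidx p = z then ?f p else 0)"
    unfolding Xmult_def by (intro sum.cong) auto
  also have "\<dots> = (\<Sum>p \<in> ?F. ?f p)"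
    by (rule sum.inter_filter[symmetric]) (use assms in simp)
  finally have "\<bar>Xmult A B z\<bar> \<le> (\<Sum>p \<in> ?F. \<bar>?f p\<bar>)"
    by (simp only: sum_abs)
  also have "\<dots> \<le> (\<Sum>(x, y) \<in> ?F. \<bar>A x\<bar> * \<bar>B y\<bar>)"
  proof (rule sum_mono, clarify)
    fix x y
    show "\<bar>A x * B y * bcoef x y\<bar> \<le> \<bar>A x\<bar> * \<bar>B y\<bar>"
      using abs_bcoef_le_1[of x y] by (simp add: abs_mult mult_left_le)
  qed
  finally show ?thesis .
qed

lemma supp_Xmult_subset: "supp (Xmult A B) \<subseteq> case_prod bidx ` (supp A \<times> supp B)"
proof
  fix z assume "z \<in> supp (Xmult A B)"
  then obtain p where "p \<in> supp A \<times> supp B"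
    and "(case p of (x, y) \<Rightarrow> if bidx x y = z then A x * B y * bcoef x y else 0) \<noteq> 0"
    unfolding supp_def Xmult_def by (auto elim: sum.not_neutral_contains_not_neutral)
  then show "z \<in> case_prod bidx ` (supp A \<times> supp B)"
    by (auto split: if_splits)
qed

lemma Xnorm_Xmult_le:
  assumes "finite (supp A)" "finite (supp B)"
  shows "Xnorm (Xmult A B) \<le> Xnorm A * Xnorm B"
proof -
  let ?P = "supp A \<times> supp B"
  let ?T = "case_prod bidx ` ?P"
  have finP: "finite ?P" and finT: "finite ?T" using assms by simp_all
  have "Xnorm (Xmult A B) = (\<Sum>z\<in>?T. \<bar>Xmult A B z\<bar>)"
    by (rule Xnorm_eq_sum_abs_superset[OF finT supp_Xmult_subset])
  also have "\<dots> \<le> (\<Sum>z\<in>?T. \<Sum>(x, y) \<in> {p \<in> ?P. case_prod bidx p = z}. \<bar>A x\<bar> * \<bar>B y\<bar>)"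
    by (intro sum_mono abs_Xmult_le[OF assms])
  also have "\<dots> = (\<Sum>(x, y) \<in> ?P. \<bar>A x\<bar> * \<bar>B y\<bar>)"
    by (rule sum.group[OF finP finT subset_refl])
  also have "\<dots> = Xnorm A * Xnorm B"
    by (simp add: Xnorm_eq_sum_abs sum_product sum.cartesian_product case_prod_beta)
  finally show ?thesis .
qed

theorem mainTheorem1:
  fixes n :: nat
  shows "(\<forall>A\<in>XV n. Xnorm A \<ge> 0 \<and> (Xnorm A = 0 \<longleftrightarrow> A = (\<lambda>_. 0))) \<and>
         (\<forall>A\<in>XV n. \<forall>c::real. Xnorm (\<lambda>x. c * A x) = \<bar>c\<bar> * Xnorm A) \<and>
         (\<forall>A\<in>XV n. \<forall>B\<in>XV n. Xnorm (\<lambda>x. A x + B x) \<le> Xnorm A + Xnorm B) \<and>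
         (\<forall>A\<in>XV n. \<forall>B\<in>XV n. Xnorm (Xmult A B) \<le> Xnorm A * Xnorm B)"
proof -
  have fin: "finite (supp A)" if "A \<in> XV n" for A
    using that by (simp add: XV_def)
  show ?thesis
    by (intro conjI ballI allI)
      (simp_all add: fin Xnorm_nonneg Xnorm_eq_0_iff Xnorm_scale Xnorm_add_le Xnorm_Xmult_le)
qed

end
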